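(* Let $\overrightarrow{C}=\bigcup_{j=1}^t m_j\overrightarrow{C_{n_j}}$ be a $\Theta$-oriented 2-regular graph with at least two cycle components (where $n_1<\dots<n_t$ are the distinct cycle lengths, $m_j\ge1$, $\sum_j m_j\ge2$), and let $D$ be a distance set of $\overrightarrow{C}$. Then $\overrightarrow{C}$ is $D$-antimagic if and only if $\min(D)=0$.
   Context: An oriented graph is a simple graph each of whose edges is given one direction (an arc $(u,v)$ goes from $u$ to $v$). For vertices $u,v$, $d(u,v)$ is the length of a shortest directed path from $u$ to $v$ ($d(u,u)=0$, $\infty$ if no path). A distance set of an oriented graph is a nonempty set $D$ of nonnegative integers each of which is a finite distance $d(u,v)$ for some pair of vertices. $N_D(v)=\{y : d(v,y)\in D\}$; for a bijection $f:V\to\{1,\dots,|V|\}$, $\omega_D(v)=\sum_{x\in N_D(v)}f(x)$ (empty sum $0$); $f$ is $D$-antimagic if distinct vertices have distinct $D$-weights, and the graph is $D$-antimagic if such an $f$ exists. An oriented 2-regular graph is an orientation of a disjoint union of cycles, each of length at least $3$. A cycle component on $v_1,\dots,v_n$ is $\Theta$-oriented if it has exactly one source (in-degree $0$) and exactly one sink (out-degree $0$) and these are adjacent, i.e. up to relabeling its arcs are $(v_i,v_{i+1})$, $1\le i\le n-1$, and $(v_1,v_n)$; the oriented 2-regular graph is $\Theta$-oriented if every cycle component is $\Theta$-oriented. *)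

theory Defs
  imports Main "HOL-Library.Extended_Nat"
begin

definition odist :: "('a \<times> 'a) set \<Rightarrow> 'a \<Rightarrow> 'a \<Rightarrow> enat" where
  "odist A u v = (if (u, v) \<in> A\<^sup>* then enat (LEAST n. (u, v) \<in> A ^^ n) else \<infinity>)"

definition distance_set :: "'a set \<Rightarrow> ('a \<times> 'a) set \<Rightarrow> nat set \<Rightarrow> bool" where
  "distance_set V A D \<longleftrightarrow> D \<noteq> {} \<and>
     (\<forall>k\<in>D. \<exists>u\<in>V. \<exists>v\<in>V. odist A u v = enat k)"

definition D_neighbourhood :: "'a set \<Rightarrow> ('a \<times> 'a) set \<Rightarrow> nat set \<Rightarrow> 'a \<Rightarrow> 'a set" where
  "D_neighbourhood V A D v = {y\<in>V. \<exists>k\<in>D. odist A v y = enat k}"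

definition D_weight :: "'a set \<Rightarrow> ('a \<times> 'a) set \<Rightarrow> nat set \<Rightarrow> ('a \<Rightarrow> nat) \<Rightarrow> 'a \<Rightarrow> nat" where
  "D_weight V A D f v = (\<Sum>x\<in>D_neighbourhood V A D v. f x)"

definition D_antimagic_labeling :: "'a set \<Rightarrow> ('a \<times> 'a) set \<Rightarrow> nat set \<Rightarrow> ('a \<Rightarrow> nat) \<Rightarrow> bool" where
  "D_antimagic_labeling V A D f \<longleftrightarrow>
     bij_betw f V {1..card V} \<and> inj_on (D_weight V A D f) V"

definition D_antimagic :: "'a set \<Rightarrow> ('a \<times> 'a) set \<Rightarrow> nat set \<Rightarrow> bool" where
  "D_antimagic V A D \<longleftrightarrow> (\<exists>f. D_antimagic_labeling V A D f)"

text \<open>Standard model of a Theta-oriented 2-regular graph with cycle lengths ns: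
  component c has vertices (c,0),...,(c,n_c-1) and arcs (c,i)->(c,i+1) and (c,0)->(c,n_c-1).\<close>
definition theta_vertices :: "nat list \<Rightarrow> (nat \<times> nat) set" where
  "theta_vertices ns = {(c, i). c < length ns \<and> i < ns ! c}"

definition theta_arcs :: "nat list \<Rightarrow> ((nat \<times> nat) \<times> (nat \<times> nat)) set" where
  "theta_arcs ns =
     {((c, i), (c, Suc i)) | c i. c < length ns \<and> Suc i < ns ! c} \<union>
     {((c, 0), (c, ns ! c - 1)) | c. c < length ns}"

definition theta_oriented_2reg :: "'a set \<Rightarrow> ('a \<times> 'a) set \<Rightarrow> nat list \<Rightarrow> bool" where
  "theta_oriented_2reg V A ns \<longleftrightarrow>
     (\<forall>n\<in>set ns. 3 \<le> n) \<and> A \<subseteq> V \<times> V \<and>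
     (\<exists>\<phi>. bij_betw \<phi> V (theta_vertices ns) \<and>
        (\<forall>u\<in>V. \<forall>v\<in>V. (u, v) \<in> A \<longleftrightarrow> (\<phi> u, \<phi> v) \<in> theta_arcs ns))"

end

(* D-antimagicness is invariant under digraph isomorphism, so it suffices to treat the standard
   model of Defs.  If 0 is not in D, every sink has an empty D-neighbourhood, so any two sinks
   have weight 0.  If 0 is in D, put the path vertex at distance l from its sink at level l and
   the source on top, at level n - 1.  A vertex at level l then sees the vertex at level l - d
   at distance d, except that a source sees its sink at distance 1.  Labelling the vertices
   level by level, in a suitable order within each level, makes the weight strictly increasing
   in (level, component order), because the own label and the labels further down grow along
   this order.  When 1 is in D, a source whose level is not in D carries the label of its sink
   as an extra summand; these sources are labelled first within their level, which leaves gaps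
   in the labelling large enough to absorb the sink labels. *)

theory Submission
  imports Defs "HOL-Library.Product_Lexorder"
begin

section \<open>Ranks in a finite set\<close>

definition rank_in :: "'b set \<Rightarrow> ('b \<Rightarrow> 'k::linorder) \<Rightarrow> 'b \<Rightarrow> nat" where
  "rank_in S K x = card {z\<in>S. K z < K x}"

lemma rank_in_strict_mono:
  assumes "finite S" "x \<in> S" "K x < K y"
  shows "rank_in S K x < rank_in S K y"
proof -
  have "{z\<in>S. K z < K x} \<subset> {z\<in>S. K z < K y}"
    using assms by (auto intro: less_trans)
  then show ?thesis
    unfolding rank_in_def using assms(1) by (intro psubset_card_mono) auto
qed

lemma rank_in_less_iff:
  assumes "finite S" "inj_on K S" "x \<in> S" "y \<in> S"
  shows "rank_in S K x < rank_in S K y \<longleftrightarrow> K x < K y"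
proof
  assume less: "rank_in S K x < rank_in S K y"
  show "K x < K y"
  proof (rule ccontr)
    assume "\<not> K x < K y"
    then consider "K y < K x" | "K x = K y" by fastforce
    then show False
    proof cases
      case 1
      then show False using rank_in_strict_mono[OF assms(1,4) 1] less by simp
    next
      case 2
      then show False using less inj_onD[OF assms(2) 2 assms(3,4)] by simp
    qed
  qed
qed (rule rank_in_strict_mono[OF assms(1,3)])

lemma rank_in_inj:
  assumes "finite S" "inj_on K S"
  shows "inj_on (rank_in S K) S"
proof (rule inj_onI)
  fix x y assume xy: "x \<in> S" "y \<in> S" "rank_in S K x = rank_in S K y"
  then have "\<not> K x < K y" "\<not> K y < K x"
    using rank_in_less_iff[OF assms] by (metis less_irrefl)+
  then show "x = y" using inj_onD[OF assms(2) _ xy(1,2)] by fastforce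
qed

lemma rank_in_less_card:
  assumes "finite S" "x \<in> S"
  shows "rank_in S K x < card S"
  unfolding rank_in_def using assms by (intro psubset_card_mono) auto

lemma bij_betw_rank_in:
  assumes "finite S" "inj_on K S"
  shows "bij_betw (\<lambda>x. Suc (rank_in S K x)) S {1..card S}"
proof -
  have "bij_betw (rank_in S K) S (rank_in S K ` S)"
    using rank_in_inj[OF assms] by (rule inj_on_imp_bij_betw)
  moreover have "rank_in S K ` S = {..<card S}"
    using rank_in_less_card[OF assms(1)] card_image[OF rank_in_inj[OF assms]]
    by (intro card_subset_eq) auto
  moreover have "bij_betw Suc {..<card S} {1..card S}"
    by (rule bij_betw_byWitness[where f'="\<lambda>n. n - 1"]) auto
  ultimately show ?thesis
    using bij_betw_trans[of "rank_in S K" S _ Suc] by (auto simp: comp_def)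
qed

lemma card_rank_in_less:
  assumes "finite S" "inj_on K S" "x \<in> S"
  shows "card {z\<in>S. rank_in S K z < rank_in S K x} = rank_in S K x"
proof -
  have "{z\<in>S. rank_in S K z < rank_in S K x} = {z\<in>S. K z < K x}"
    using rank_in_less_iff[OF assms(1,2) _ assms(3)] by blast
  then show ?thesis by (simp add: rank_in_def)
qed

lemma card_rank_in_le:
  assumes "finite S" "inj_on K S" "x \<in> S"
  shows "card {z\<in>S. rank_in S K z \<le> rank_in S K x} = Suc (rank_in S K x)"
proof -
  have "{z\<in>S. rank_in S K z \<le> rank_in S K x} = insert x {z\<in>S. rank_in S K z < rank_in S K x}"
    using assms(3) inj_onD[OF rank_in_inj[OF assms(1,2)]] by (auto simp: le_less)
  then show ?thesis using card_rank_in_less[OF assms] assms(1) by simp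
qed

lemma rank_in_add:
  assumes "finite S" "K x \<le> K y"
  shows "rank_in S K y = rank_in S K x + card {z\<in>S. K x \<le> K z \<and> K z < K y}"
proof -
  have "{z\<in>S. K z < K y} = {z\<in>S. K z < K x} \<union> {z\<in>S. K x \<le> K z \<and> K z < K y}"
    using assms(2) by (auto intro: less_le_trans)
  moreover have "card ({z\<in>S. K z < K x} \<union> {z\<in>S. K x \<le> K z \<and> K z < K y})
      = card {z\<in>S. K z < K x} + card {z\<in>S. K x \<le> K z \<and> K z < K y}"
    using assms(1) by (intro card_Un_disjoint) auto
  ultimately show ?thesis unfolding rank_in_def by simp
qed

lemma inj_on_if_strict_mono_wrt:
  fixes K :: "'b \<Rightarrow> 'k::linorder" and W :: "'b \<Rightarrow> 'w::order"
  assumes "inj_on K S" "\<And>x y. x \<in> S \<Longrightarrow> y \<in> S \<Longrightarrow> K x < K y \<Longrightarrow> W x < W y"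
  shows "inj_on W S"
proof (rule inj_onI)
  fix x y assume xy: "x \<in> S" "y \<in> S" "W x = W y"
  then have "\<not> K x < K y" "\<not> K y < K x" using assms(2) by fastforce+
  then show "x = y" using inj_onD[OF assms(1) _ xy(1,2)] by fastforce
qed

lemma sum_le_sum_superset:
  fixes a b :: "'i \<Rightarrow> nat"
  assumes "finite B" "A \<subseteq> B" "\<And>d. d \<in> A \<Longrightarrow> a d \<le> b d"
  shows "sum a A \<le> sum b B"
proof -
  have "sum a A \<le> sum b A" using assms(3) by (rule sum_mono)
  also have "\<dots> \<le> sum b B" using assms(1,2) by (intro sum_mono2) auto
  finally show ?thesis .
qed

lemma sum_less_sum_superset:
  fixes a b :: "'i \<Rightarrow> nat"
  assumes "finite B" "A \<subseteq> B" "\<And>d. d \<in> A \<Longrightarrow> a d \<le> b d"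
    and "e \<in> B" "e \<in> A \<Longrightarrow> a e < b e" "0 < b e"
  shows "sum a A < sum b B"
proof (cases "e \<in> A")
  case True
  have "sum a A < sum b A"
    using True assms(1-3,5) finite_subset by (intro sum_strict_mono_ex1) auto
  also have "\<dots> \<le> sum b B" using assms(1,2) by (intro sum_mono2) auto
  finally show ?thesis .
next
  case False
  have "sum a A \<le> sum b A" using assms(3) by (rule sum_mono)
  also have "\<dots> < sum b (insert e A)"
    using False assms(1,2,6) finite_subset by (subst sum.insert) auto
  also have "\<dots> \<le> sum b B" using assms(1,2,4) by (intro sum_mono2) auto
  finally show ?thesis .
qed

section \<open>Invariance under digraph isomorphism\<close>

definition digraph_iso ::
    "('a \<Rightarrow> 'b) \<Rightarrow> 'a set \<Rightarrow> ('a \<times> 'a) set \<Rightarrow> 'b set \<Rightarrow> ('b \<times> 'b) set \<Rightarrow> bool" where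
  "digraph_iso \<phi> V A W B \<longleftrightarrow> bij_betw \<phi> V W \<and> A \<subseteq> V \<times> V \<and> B \<subseteq> W \<times> W \<and>
     (\<forall>u\<in>V. \<forall>v\<in>V. (u, v) \<in> A \<longleftrightarrow> (\<phi> u, \<phi> v) \<in> B)"

lemma digraph_iso_inv:
  assumes "digraph_iso \<phi> V A W B"
  shows "digraph_iso (inv_into V \<phi>) W B V A"
proof -
  have bij: "bij_betw \<phi> V W" using assms by (simp add: digraph_iso_def)
  have "(x, y) \<in> B \<longleftrightarrow> (inv_into V \<phi> x, inv_into V \<phi> y) \<in> A" if "x \<in> W" "y \<in> W" for x y
    using assms that bij_betw_inv_into_right[OF bij] bij_betw_imp_surj_on[OF bij_betw_inv_into[OF bij]]
    unfolding digraph_iso_def by (metis image_eqI)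
  then show ?thesis using assms bij_betw_inv_into[OF bij] by (simp add: digraph_iso_def)
qed

lemma relpow_digraph_iso:
  assumes iso: "digraph_iso \<phi> V A W B" and u: "u \<in> V"
  shows "(u, v) \<in> A ^^ k \<longleftrightarrow> v \<in> V \<and> (\<phi> u, \<phi> v) \<in> B ^^ k"
proof (induction k arbitrary: v)
  case 0
  show ?case using u iso inj_onD[of \<phi> V u] by (auto simp: digraph_iso_def bij_betw_def)
next
  case (Suc k)
  have AV: "A \<subseteq> V \<times> V" and BW: "B \<subseteq> W \<times> W" and bij: "bij_betw \<phi> V W"
    and arc: "\<forall>u\<in>V. \<forall>v\<in>V. (u, v) \<in> A \<longleftrightarrow> (\<phi> u, \<phi> v) \<in> B"
    using iso by (auto simp: digraph_iso_def)
  show ?case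
  proof
    assume "(u, v) \<in> A ^^ Suc k"
    then obtain w where w: "(u, w) \<in> A ^^ k" "(w, v) \<in> A" by auto
    have "w \<in> V" "v \<in> V" using w(2) AV by auto
    then have "(\<phi> w, \<phi> v) \<in> B" using w(2) arc by blast
    with w(1) show "v \<in> V \<and> (\<phi> u, \<phi> v) \<in> B ^^ Suc k"
      using Suc.IH \<open>v \<in> V\<close> by auto
  next
    assume v: "v \<in> V \<and> (\<phi> u, \<phi> v) \<in> B ^^ Suc k"
    then obtain y where y: "(\<phi> u, y) \<in> B ^^ k" "(y, \<phi> v) \<in> B" by auto
    then obtain w where w: "w \<in> V" "y = \<phi> w" using BW bij by (auto simp: bij_betw_def)
    then have "(u, w) \<in> A ^^ k" "(w, v) \<in> A" using Suc.IH y v arc by auto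
    then show "(u, v) \<in> A ^^ Suc k" by auto
  qed
qed

lemma odist_digraph_iso:
  assumes "digraph_iso \<phi> V A W B" "u \<in> V" "v \<in> V"
  shows "odist A u v = odist B (\<phi> u) (\<phi> v)"
proof -
  have relpow: "(u, v) \<in> A ^^ k \<longleftrightarrow> (\<phi> u, \<phi> v) \<in> B ^^ k" for k
    using relpow_digraph_iso[OF assms(1,2)] assms(3) by blast
  then have "(u, v) \<in> A\<^sup>* \<longleftrightarrow> (\<phi> u, \<phi> v) \<in> B\<^sup>*" by (simp add: rtrancl_power)
  then show ?thesis unfolding odist_def relpow by simp
qed

lemma D_neighbourhood_digraph_iso:
  assumes iso: "digraph_iso \<phi> V A W B" and u: "u \<in> V"
  shows "\<phi> ` D_neighbourhood V A D u = D_neighbourhood W B D (\<phi> u)"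
proof -
  have bij: "bij_betw \<phi> V W" using iso by (simp add: digraph_iso_def)
  have "D_neighbourhood W B D (\<phi> u) = \<phi> ` {y\<in>V. \<exists>k\<in>D. odist B (\<phi> u) (\<phi> y) = enat k}"
    unfolding D_neighbourhood_def using bij_betw_imp_surj_on[OF bij] by blast
  also have "\<dots> = \<phi> ` D_neighbourhood V A D u"
    unfolding D_neighbourhood_def using odist_digraph_iso[OF iso u] by (intro image_cong) auto
  finally show ?thesis by simp
qed

lemma D_weight_digraph_iso:
  assumes iso: "digraph_iso \<phi> V A W B" and u: "u \<in> V"
  shows "D_weight V A D (g \<circ> \<phi>) u = D_weight W B D g (\<phi> u)"
proof -
  have "inj_on \<phi> (D_neighbourhood V A D u)"
    using iso by (auto simp: digraph_iso_def bij_betw_def D_neighbourhood_def intro: inj_on_subset)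
  then show ?thesis
    unfolding D_weight_def D_neighbourhood_digraph_iso[OF iso u, symmetric]
    by (simp add: sum.reindex)
qed

lemma D_antimagic_labeling_digraph_iso:
  assumes iso: "digraph_iso \<phi> V A W B" and g: "D_antimagic_labeling W B D g"
  shows "D_antimagic_labeling V A D (g \<circ> \<phi>)"
proof -
  have bij: "bij_betw \<phi> V W" using iso by (simp add: digraph_iso_def)
  have "bij_betw (g \<circ> \<phi>) V {1..card V}"
    using bij_betw_trans[OF bij] g bij_betw_same_card[OF bij]
    by (auto simp: D_antimagic_labeling_def)
  moreover have "inj_on (D_weight W B D g \<circ> \<phi>) V"
    using g bij by (intro comp_inj_on) (auto simp: D_antimagic_labeling_def bij_betw_def)
  then have "inj_on (D_weight V A D (g \<circ> \<phi>)) V"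
    by (rule inj_on_cong[THEN iffD1, rotated]) (simp add: D_weight_digraph_iso[OF iso])
  ultimately show ?thesis by (simp add: D_antimagic_labeling_def)
qed

lemma D_antimagic_digraph_iso:
  assumes "digraph_iso \<phi> V A W B"
  shows "D_antimagic V A D \<longleftrightarrow> D_antimagic W B D"
  using D_antimagic_labeling_digraph_iso[OF assms] D_antimagic_labeling_digraph_iso[OF digraph_iso_inv[OF assms]]
  unfolding D_antimagic_def by blast

lemma distance_set_finite:
  assumes "finite V" "distance_set V A D"
  shows "finite D"
proof (rule finite_subset)
  show "D \<subseteq> (\<lambda>(u, v). the_enat (odist A u v)) ` (V \<times> V)"
    using assms(2) unfolding distance_set_def by force
qed (use assms(1) in simp)

section \<open>Distances in the standard model\<close>

lemma mem_theta_vertices [simp]: "(c, i) \<in> theta_vertices ns \<longleftrightarrow> c < length ns \<and> i < ns ! c"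
  by (simp add: theta_vertices_def)

lemma finite_theta_vertices [simp]: "finite (theta_vertices ns)"
proof -
  have "theta_vertices ns = (SIGMA c:{..<length ns}. {..<ns ! c})"
    by (auto simp: theta_vertices_def)
  then show ?thesis by simp
qed

lemma theta_arcs_iff:
  "((c, i), (c', j)) \<in> theta_arcs ns \<longleftrightarrow>
     c < length ns \<and> c' = c \<and> ((j = Suc i \<and> Suc i < ns ! c) \<or> (i = 0 \<and> j = ns ! c - 1))"
  by (auto simp: theta_arcs_def)

lemma theta_arcs_subset:
  assumes "\<forall>n\<in>set ns. 3 \<le> n"
  shows "theta_arcs ns \<subseteq> theta_vertices ns \<times> theta_vertices ns"
proof
  fix p assume "p \<in> theta_arcs ns"
  then obtain c i j where p: "p = ((c, i), (c, j))" "c < length ns"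
    and "(j = Suc i \<and> Suc i < ns ! c) \<or> (i = 0 \<and> j = ns ! c - 1)"
    by (auto simp: theta_arcs_def)
  moreover have "3 \<le> ns ! c" using assms p(2) by simp
  ultimately show "p \<in> theta_vertices ns \<times> theta_vertices ns" by auto
qed

lemma relpow_theta_arcs:
  assumes "3 \<le> ns ! c" "(c, i) \<in> theta_vertices ns"
  shows "((c, i), (c', j)) \<in> theta_arcs ns ^^ k \<longleftrightarrow>
    c' = c \<and> ((j = i + k \<and> j < ns ! c) \<or> (i = 0 \<and> k = 1 \<and> j = ns ! c - 1))"
proof (induction k arbitrary: c' j)
  case 0
  then show ?case using assms by auto
next
  case (Suc k)
  have "((c, i), (c', j)) \<in> theta_arcs ns ^^ Suc k \<longleftrightarrow>
      (\<exists>c'' j'. ((c, i), (c'', j')) \<in> theta_arcs ns ^^ k \<and> ((c'', j'), (c', j)) \<in> theta_arcs ns)"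
    by (auto simp: relcomp_unfold)
  also have "\<dots> \<longleftrightarrow> c' = c \<and> ((j = i + Suc k \<and> j < ns ! c) \<or> (i = 0 \<and> Suc k = 1 \<and> j = ns ! c - 1))"
    using assms by (auto simp: Suc.IH theta_arcs_iff)
  finally show ?case .
qed

lemma odist_eq_enat_iff:
  "odist A u v = enat k \<longleftrightarrow> (u, v) \<in> A ^^ k \<and> (\<forall>j<k. (u, v) \<notin> A ^^ j)"
proof (cases "(u, v) \<in> A\<^sup>*")
  case True
  have "(LEAST n. (u, v) \<in> A ^^ n) = k \<longleftrightarrow> (u, v) \<in> A ^^ k \<and> (\<forall>j<k. (u, v) \<notin> A ^^ j)"
    using True by (metis (mono_tags, lifting) LeastI Least_equality not_less_Least rtrancl_imp_relpow
      linorder_not_less)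
  then show ?thesis using True by (simp add: odist_def)
next
  case False
  then show ?thesis by (auto simp: odist_def dest: relpow_imp_rtrancl)
qed

lemma odist_theta_arcs:
  assumes "3 \<le> ns ! c" "(c, i) \<in> theta_vertices ns"
  shows "odist (theta_arcs ns) (c, i) (c', j) = enat k \<longleftrightarrow>
    c' = c \<and> j < ns ! c \<and> (if i = 0 \<and> j + 1 = ns ! c then k = 1 else j = i + k)"
  unfolding odist_eq_enat_iff relpow_theta_arcs[OF assms] using assms by auto

lemma D_neighbourhood_theta:
  assumes "3 \<le> ns ! c" "(c, i) \<in> theta_vertices ns"
  shows "D_neighbourhood (theta_vertices ns) (theta_arcs ns) D (c, i) =
    (\<lambda>d. (c, i + d)) ` {d\<in>D. i + d < ns ! c \<and> (i = 0 \<longrightarrow> d + 1 \<noteq> ns ! c)} \<union>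
    (if i = 0 \<and> 1 \<in> D then {(c, ns ! c - 1)} else {})"
  using assms by (auto simp: D_neighbourhood_def odist_theta_arcs split: if_splits)

(* Level coordinates: the path vertex (c, i), i > 0, goes to level n - 1 - i, its distance to
   the sink; the source (c, 0) goes to the top level n - 1. *)
definition theta_flip :: "nat list \<Rightarrow> nat \<times> nat \<Rightarrow> nat \<times> nat" where
  "theta_flip ns = (\<lambda>(c, i). (c, if i = 0 then ns ! c - 1 else ns ! c - 1 - i))"

lemma theta_flip_in:
  assumes "3 \<le> ns ! c" "(c, i) \<in> theta_vertices ns"
  shows "theta_flip ns (c, i) \<in> theta_vertices ns"
  using assms by (simp add: theta_flip_def)

lemma theta_flip_flip:
  assumes "3 \<le> ns ! c" "(c, i) \<in> theta_vertices ns"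
  shows "theta_flip ns (theta_flip ns (c, i)) = (c, i)"
  using assms by (auto simp: theta_flip_def)

lemma bij_betw_theta_flip:
  assumes "\<forall>n\<in>set ns. 3 \<le> n"
  shows "bij_betw (theta_flip ns) (theta_vertices ns) (theta_vertices ns)"
  by (rule bij_betw_byWitness[where f' = "theta_flip ns"])
    (use assms theta_flip_in theta_flip_flip in fastforce)+

(* The weight of theta_flip x under the labelling g \<circ> theta_flip (see D_weight_theta): from
   level l the vertex at level l - d is at distance d, except that a source reaches its sink in
   one step rather than l steps. *)
definition level_weight :: "nat list \<Rightarrow> nat set \<Rightarrow> (nat \<times> nat \<Rightarrow> nat) \<Rightarrow> nat \<times> nat \<Rightarrow> nat" where
  "level_weight ns D g = (\<lambda>(c, l).
     (\<Sum>d\<in>{d\<in>D. d \<le> l \<and> (l + 1 = ns ! c \<longrightarrow> d \<noteq> l)}. g (c, l - d)) +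
     (if l + 1 = ns ! c \<and> 1 \<in> D then g (c, 0) else 0))"

lemma D_weight_theta:
  assumes n: "3 \<le> ns ! c" and ci: "(c, i) \<in> theta_vertices ns"
  shows "D_weight (theta_vertices ns) (theta_arcs ns) D (g \<circ> theta_flip ns) (c, i) =
    level_weight ns D g (theta_flip ns (c, i))"
proof -
  define l where "l = snd (theta_flip ns (c, i))"
  have flip: "theta_flip ns (c, i) = (c, l)" by (simp add: l_def theta_flip_def)
  have flip_shift: "theta_flip ns (c, i + d) = (c, l - d)" if "i + d < ns ! c" for d
    using that by (auto simp: l_def theta_flip_def)
  have source: "l + 1 = ns ! c \<longleftrightarrow> i = 0" using n ci by (auto simp: l_def theta_flip_def)
  define E where "E = {d\<in>D. i + d < ns ! c \<and> (i = 0 \<longrightarrow> d + 1 \<noteq> ns ! c)}"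
  have E: "E = {d\<in>D. d \<le> l \<and> (l + 1 = ns ! c \<longrightarrow> d \<noteq> l)}"
    using n ci by (auto simp: E_def l_def theta_flip_def)
  define S where "S = (if i = 0 \<and> 1 \<in> D then {(c, ns ! c - 1)} else {})"
  have fin: "finite E" unfolding E_def by (rule finite_subset[of _ "{..<ns ! c}"]) auto
  have "D_weight (theta_vertices ns) (theta_arcs ns) D (g \<circ> theta_flip ns) (c, i) =
      (\<Sum>y\<in>(\<lambda>d. (c, i + d)) ` E. g (theta_flip ns y)) + (\<Sum>y\<in>S. g (theta_flip ns y))"
    unfolding D_weight_def D_neighbourhood_theta[OF n ci] E_def[symmetric] S_def[symmetric]
    using fin by (subst sum.union_disjoint) (auto simp: S_def E_def)
  also have "(\<Sum>y\<in>(\<lambda>d. (c, i + d)) ` E. g (theta_flip ns y)) = (\<Sum>d\<in>E. g (c, l - d))"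
    by (subst sum.reindex) (auto simp: inj_on_def E_def flip_shift intro: sum.cong)
  also have "(\<Sum>y\<in>S. g (theta_flip ns y)) = (if l + 1 = ns ! c \<and> 1 \<in> D then g (c, 0) else 0)"
    using n source by (auto simp: S_def theta_flip_def)
  finally show ?thesis unfolding flip E level_weight_def by (simp only: case_prod_conv)
qed

lemma level_weight_zero_one:
  assumes "0 \<in> D" "1 \<in> D" "2 \<le> ns ! c"
  shows "level_weight ns D g (c, l) = g (c, l) + (\<Sum>d\<in>{d\<in>D. 1 \<le> d \<and> d \<le> l}. g (c, l - d)) +
    (if l + 1 = ns ! c \<and> l \<notin> D then g (c, 0) else 0)"
proof -
  let ?P = "{d\<in>D. 1 \<le> d \<and> d \<le> l}"
  have fin: "finite ?P" by (rule finite_subset[of _ "{..l}"]) auto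
  consider (path) "l + 1 \<noteq> ns ! c" | (light) "l + 1 = ns ! c" "l \<in> D" | (heavy) "l + 1 = ns ! c" "l \<notin> D"
    by blast
  then show ?thesis
  proof cases
    case path
    then have "{d\<in>D. d \<le> l \<and> (l + 1 = ns ! c \<longrightarrow> d \<noteq> l)} = insert 0 ?P" using assms(1) by auto
    then show ?thesis using path fin by (simp add: level_weight_def)
  next
    case light
    then have "{d\<in>D. d \<le> l \<and> (l + 1 = ns ! c \<longrightarrow> d \<noteq> l)} = insert 0 (?P - {l})"
      using assms by auto
    moreover have "(\<Sum>d\<in>?P. g (c, l - d)) = g (c, 0) + (\<Sum>d\<in>?P - {l}. g (c, l - d))"
      using light assms(3) by (subst sum.remove[OF fin, of l]) auto
    ultimately show ?thesis using light fin assms(2) by (simp add: level_weight_def)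
  next
    case heavy
    then have "{d\<in>D. d \<le> l \<and> (l + 1 = ns ! c \<longrightarrow> d \<noteq> l)} = insert 0 ?P" using assms by auto
    then show ?thesis using heavy fin assms(2) by (simp add: level_weight_def)
  qed
qed

section \<open>Antimagic labellings of the standard model\<close>

lemma theta_not_D_antimagic:
  assumes "\<forall>n\<in>set ns. 3 \<le> n" "2 \<le> length ns" "0 \<notin> D"
  shows "\<not> D_antimagic (theta_vertices ns) (theta_arcs ns) D"
proof
  define sink where "sink c = (c, ns ! c - 1)" for c
  have n: "3 \<le> ns ! c" if "c < length ns" for c
    using assms(1) that by simp
  have sink_in: "sink c \<in> theta_vertices ns" if "c < length ns" for c
    using n[OF that] that by (simp add: sink_def)
  have D_pos: "0 < d" if "d \<in> D" for d
    using that assms(3) by (cases d) auto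
  have no_nbhd: "D_neighbourhood (theta_vertices ns) (theta_arcs ns) D (sink c) = {}"
    if "c < length ns" for c
    using D_neighbourhood_theta[OF n[OF that] sink_in[OF that, unfolded sink_def], of D]
      assms(3) n[OF that] by (auto simp: sink_def dest!: D_pos)
  assume "D_antimagic (theta_vertices ns) (theta_arcs ns) D"
  then obtain f where inj: "inj_on (D_weight (theta_vertices ns) (theta_arcs ns) D f) (theta_vertices ns)"
    by (auto simp: D_antimagic_def D_antimagic_labeling_def)
  have zero: "D_weight (theta_vertices ns) (theta_arcs ns) D f (sink c) = 0" if "c < length ns" for c
    by (simp add: D_weight_def no_nbhd[OF that])
  have two: "0 < length ns" "1 < length ns" using assms(2) by auto
  have "D_weight (theta_vertices ns) (theta_arcs ns) D f (sink 0) =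
      D_weight (theta_vertices ns) (theta_arcs ns) D f (sink 1)"
    using zero[OF two(1)] zero[OF two(2)] by simp
  then have "sink 0 = sink 1" by (rule inj_onD[OF inj _ sink_in[OF two(1)] sink_in[OF two(2)]])
  then show False by (simp add: sink_def)
qed

locale theta_labelling =
  fixes ns :: "nat list" and D :: "nat set"
  assumes lengths_ge3: "\<And>c. c < length ns \<Longrightarrow> 3 \<le> ns ! c"
    and zero_in_D: "0 \<in> D"
begin

abbreviation V :: "(nat \<times> nat) set" where "V \<equiv> theta_vertices ns"

lemma level_antimagic_if_one_notin:
  assumes "1 \<notin> D"
  shows "\<exists>g. bij_betw g V {1..card V} \<and> inj_on (level_weight ns D g) V"
proof -
  \<comment> \<open>Shorter cycles first within a level, so a source follows all path vertices of its level.\<close>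
  define K :: "nat \<times> nat \<Rightarrow> nat \<times> nat \<times> nat" where "K = (\<lambda>(c, l). (l, ns ! c, c))"
  define g where "g x = Suc (rank_in V K x)" for x
  define E where "E = (\<lambda>(c, l). {d\<in>D. d \<le> l \<and> (l + 1 = ns ! c \<longrightarrow> d \<noteq> l)})"
  have K_inj: "inj_on K V" by (auto simp: K_def inj_on_def)
  have weight: "level_weight ns D g (c, l) = (\<Sum>d\<in>E (c, l). g (c, l - d))" for c l
    using assms by (simp add: level_weight_def E_def)
  have "level_weight ns D g (c1, l1) < level_weight ns D g (c2, l2)"
    if in_V: "(c1, l1) \<in> V" "(c2, l2) \<in> V"
      and less: "K (c1, l1) < K (c2, l2)" for c1 l1 c2 l2
  proof -
    have levels: "l1 < l2 \<or> (l1 = l2 \<and> ns ! c1 \<le> ns ! c2)" using less by (auto simp: K_def)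
    have "E (c1, l1) \<subseteq> E (c2, l2)" using levels in_V by (auto simp: E_def)
    moreover have pointwise: "g (c1, l1 - d) < g (c2, l2 - d)" if "d \<in> E (c1, l1)" for d
      using that in_V less levels
      by (auto simp: g_def E_def K_def intro!: rank_in_strict_mono)
    moreover have "0 \<in> E (c1, l1)"
      using zero_in_D lengths_ge3[of c1] in_V by (auto simp: E_def)
    moreover have "finite (E (c2, l2))" by (auto simp: E_def)
    ultimately show ?thesis
      unfolding weight using pointwise[of 0]
      by (intro sum_less_sum_superset[where e = 0]) (auto simp: g_def less_imp_le)
  qed
  then have "inj_on (level_weight ns D g) V"
    by (intro inj_on_if_strict_mono_wrt[OF K_inj]) auto
  moreover have "bij_betw g V {1..card V}"
    unfolding g_def by (rule bij_betw_rank_in[OF finite_theta_vertices K_inj])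
  ultimately show ?thesis by blast
qed

end

locale theta_labelling_one = theta_labelling +
  assumes one_in_D: "1 \<in> D"
begin

definition desc_rank :: "nat \<Rightarrow> nat" where
  "desc_rank = rank_in {..<length ns} (\<lambda>c. (- int (ns ! c), c))"

lemma desc_rank_less_iff:
  assumes "c1 < length ns" "c2 < length ns"
  shows "desc_rank c1 < desc_rank c2 \<longleftrightarrow> ns ! c2 < ns ! c1 \<or> (ns ! c1 = ns ! c2 \<and> c1 < c2)"
  unfolding desc_rank_def using assms
  by (subst rank_in_less_iff) (auto simp: inj_on_def)

lemma desc_rank_inj: "inj_on desc_rank {..<length ns}"
  unfolding desc_rank_def by (rule rank_in_inj) (auto simp: inj_on_def)

lemma desc_rank_less_length: "c < length ns \<Longrightarrow> desc_rank c < length ns"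
  unfolding desc_rank_def using rank_in_less_card[of "{..<length ns}" c] by simp

lemma length_le_if_desc_rank_le:
  assumes "c1 < length ns" "c2 < length ns" "desc_rank c1 \<le> desc_rank c2"
  shows "ns ! c2 \<le> ns ! c1"
  using assms desc_rank_less_iff[OF assms(1,2)] inj_onD[OF desc_rank_inj, of c1 c2]
  by (cases "c1 = c2") (auto simp: le_less)

lemma card_desc_rank_less:
  "c < length ns \<Longrightarrow> card {c'\<in>{..<length ns}. desc_rank c' < desc_rank c} = desc_rank c"
  unfolding desc_rank_def by (rule card_rank_in_less) (auto simp: inj_on_def)

lemma card_desc_rank_le:
  "c < length ns \<Longrightarrow> card {c'\<in>{..<length ns}. desc_rank c' \<le> desc_rank c} = Suc (desc_rank c)"
  unfolding desc_rank_def by (rule card_rank_in_le) (auto simp: inj_on_def)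

(* A source whose level is not in D: its weight is that of a path vertex at the same level plus
   the label of its sink. *)
definition heavy_source :: "nat \<times> nat \<Rightarrow> bool" where
  "heavy_source = (\<lambda>(c, l). l + 1 = ns ! c \<and> l \<notin> D)"

(* Within a level the heavy sources come first, in decreasing desc_rank, then the other
   vertices in increasing desc_rank.  The resulting gaps (label_gap_above, label_gap_below,
   label_gap_heavy) absorb the sink labels Suc (desc_rank c) of the heavy sources. *)
definition label_key :: "nat \<times> nat \<Rightarrow> nat \<times> nat \<times> nat" where
  "label_key = (\<lambda>(c, l). (l,
     if heavy_source (c, l) then (0, length ns - desc_rank c) else (1, desc_rank c)))"

definition label :: "nat \<times> nat \<Rightarrow> nat" where
  "label x = Suc (rank_in V label_key x)"

definition weight_key :: "nat \<times> nat \<Rightarrow> nat \<times> nat" where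
  "weight_key = (\<lambda>(c, l). (l, desc_rank c))"

lemma label_key_inj: "inj_on label_key V"
proof (rule inj_onI, clarify)
  fix c1 l1 c2 l2 assume in_V: "(c1, l1) \<in> V" "(c2, l2) \<in> V"
    and eq: "label_key (c1, l1) = label_key (c2, l2)"
  then have "l1 = l2" "desc_rank c1 = desc_rank c2"
    using desc_rank_less_length[of c1] desc_rank_less_length[of c2]
    by (auto simp: label_key_def split: if_splits)
  then show "c1 = c2 \<and> l1 = l2" using inj_onD[OF desc_rank_inj] in_V by auto
qed

lemma bij_betw_label: "bij_betw label V {1..card V}"
  unfolding label_def by (rule bij_betw_rank_in[OF finite_theta_vertices label_key_inj])

lemma label_strict_mono: "x \<in> V \<Longrightarrow> label_key x < label_key y \<Longrightarrow> label x < label y"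
  unfolding label_def by (simp add: rank_in_strict_mono)

lemma label_add:
  "label_key x \<le> label_key y \<Longrightarrow>
    label y = label x + card {w\<in>V. label_key x \<le> label_key w \<and> label_key w < label_key y}"
  unfolding label_def by (simp add: rank_in_add)

lemma label_sink:
  assumes "c < length ns"
  shows "label (c, 0) = Suc (desc_rank c)"
proof -
  have light: "\<not> heavy_source (c', 0)" if "c' < length ns" for c'
    using lengths_ge3[OF that] by (simp add: heavy_source_def)
  have pos: "0 < ns ! c'" if "c' < length ns" for c'
    using lengths_ge3[OF that] by simp
  have "{w\<in>V. label_key w < label_key (c, 0)} =
      (\<lambda>c'. (c', 0)) ` {c'\<in>{..<length ns}. desc_rank c' < desc_rank c}"
    using assms light pos by (auto simp: label_key_def)
  moreover have "card ((\<lambda>c'. (c', 0::nat)) ` {c'\<in>{..<length ns}. desc_rank c' < desc_rank c}) = desc_rank c"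
    using card_desc_rank_less[OF assms] by (subst card_image) (auto simp: inj_on_def)
  ultimately show ?thesis by (simp add: label_def rank_in_def)
qed

lemma label_gap_above:
  assumes x: "(c, l) \<in> V" "heavy_source (c, l)" and z: "z \<in> V" "l < snd z"
  shows "label (c, l) + Suc (desc_rank c) \<le> label z"
proof -
  let ?I = "{w\<in>V. label_key (c, l) \<le> label_key w \<and> label_key w < label_key z}"
  let ?C = "{c'\<in>{..<length ns}. desc_rank c' \<le> desc_rank c}"
  have "(\<lambda>c'. (c', l)) ` ?C \<subseteq> ?I"
  proof (rule image_subsetI)
    fix c' assume c': "c' \<in> ?C"
    then have "ns ! c \<le> ns ! c'" using x(1) by (intro length_le_if_desc_rank_le) auto
    then have "(c', l) \<in> V" using x(1) c' by auto
    moreover have "label_key (c, l) \<le> label_key (c', l)"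
      using x(2) c' by (auto simp: label_key_def)
    moreover have "label_key (c', l) < label_key z"
      using z(2) by (cases z) (auto simp: label_key_def)
    ultimately show "(c', l) \<in> ?I" by simp
  qed
  then have "card ((\<lambda>c'. (c', l)) ` ?C) \<le> card ?I"
    by (rule card_mono[rotated]) simp
  moreover have "card ((\<lambda>c'. (c', l)) ` ?C) = Suc (desc_rank c)"
    using card_desc_rank_le[of c] x(1) by (subst card_image) (auto simp: inj_on_def)
  moreover have "label_key (c, l) \<le> label_key z"
    using z(2) by (cases z) (auto simp: label_key_def)
  ultimately show ?thesis using label_add by fastforce
qed

lemma label_gap_below:
  assumes x: "(c, l) \<in> V" "heavy_source (c, l)"
    and z: "z \<in> V" "\<not> heavy_source z" "weight_key z < weight_key (c, l)"
  shows "label z \<le> label (c, l) + Suc (desc_rank c)"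
proof (cases "label_key z \<le> label_key (c, l)")
  case True
  then show ?thesis using label_add[of z "(c, l)"] by simp
next
  case False
  obtain c' l' where z_eq: "z = (c', l')" by (cases z)
  have "l' = l" "desc_rank c' < desc_rank c"
    using False z(3) by (auto simp: z_eq label_key_def weight_key_def)
  let ?I = "{w\<in>V. label_key (c, l) \<le> label_key w \<and> label_key w < label_key z}"
  let ?C = "{c''\<in>{..<length ns}. desc_rank c'' \<le> desc_rank c}"
  have in_I: "snd w = l \<and> fst w \<in> ?C" if "w \<in> ?I" for w
  proof -
    obtain c'' l'' where w_eq: "w = (c'', l'')" by (cases w)
    then have w: "w = (c'', l'')" "(c'', l'') \<in> V" using that by auto
    have "l'' = l" using that \<open>l' = l\<close> by (auto simp: w z_eq label_key_def)
    moreover have "desc_rank c'' \<le> desc_rank c"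
    proof (cases "heavy_source w")
      case True
      then have "length ns - desc_rank c \<le> length ns - desc_rank c''"
        using that x(2) \<open>l'' = l\<close> by (auto simp: w label_key_def)
      then show ?thesis using desc_rank_less_length[of c] desc_rank_less_length[of c''] x(1) w(2) by auto
    next
      case False
      then have "desc_rank c'' < desc_rank c'"
        using that z(2) \<open>l'' = l\<close> \<open>l' = l\<close> by (auto simp: w z_eq label_key_def)
      then show ?thesis using \<open>desc_rank c' < desc_rank c\<close> by simp
    qed
    ultimately show ?thesis using w by simp
  qed
  have "card ?I \<le> card ?C"
  proof (rule card_inj_on_le)
    show "inj_on fst ?I" using in_I by (intro inj_onI) (simp add: prod_eq_iff)
  qed (use in_I in auto)
  then have "card ?I \<le> Suc (desc_rank c)" using card_desc_rank_le[of c] x(1) by simp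
  then show ?thesis using label_add[of "(c, l)" z] False by simp
qed

lemma label_gap_heavy:
  assumes in_V: "(c1, l) \<in> V" "(c2, l) \<in> V" and heavy: "heavy_source (c1, l)" "heavy_source (c2, l)"
    and less: "desc_rank c1 < desc_rank c2"
  shows "label (c1, l) + desc_rank c1 \<le> label (c2, l) + desc_rank c2"
proof -
  have r2: "desc_rank c2 < length ns" using in_V(2) by (simp add: desc_rank_less_length)
  have key_less: "label_key (c2, l) < label_key (c1, l)"
    using heavy less r2 by (auto simp: label_key_def)
  let ?I = "{w\<in>V. label_key (c2, l) \<le> label_key w \<and> label_key w < label_key (c1, l)}"
  have in_I: "snd w = l \<and> fst w < length ns \<and> desc_rank (fst w) \<in> {desc_rank c1<..desc_rank c2}"
    if "w \<in> ?I" for w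
  proof -
    obtain c l' where w_eq: "w = (c, l')" by (cases w)
    then have w: "w = (c, l')" "(c, l') \<in> V" using that by auto
    have "l' = l" "heavy_source w" using that heavy by (auto simp: w label_key_def split: if_splits)
    then have "length ns - desc_rank c2 \<le> length ns - desc_rank c"
      "length ns - desc_rank c < length ns - desc_rank c1"
      using that heavy by (auto simp: w label_key_def)
    then show ?thesis using w \<open>l' = l\<close> r2 desc_rank_less_length[of c] by auto
  qed
  have "card ?I \<le> card {desc_rank c1<..desc_rank c2}"
  proof (rule card_inj_on_le)
    show "inj_on (\<lambda>w. desc_rank (fst w)) ?I"
      using in_I inj_onD[OF desc_rank_inj] by (intro inj_onI) (simp add: prod_eq_iff)
  qed (use in_I in auto)
  moreover have "label (c1, l) = label (c2, l) + card ?I"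
    using label_add[of "(c2, l)" "(c1, l)"] key_less by simp
  ultimately show ?thesis using less by simp
qed

definition lower_weight :: "nat \<times> nat \<Rightarrow> nat" where
  "lower_weight = (\<lambda>(c, l). \<Sum>d\<in>{d\<in>D. 1 \<le> d \<and> d \<le> l}. label (c, l - d))"

lemma level_weight_label:
  assumes "(c, l) \<in> V"
  shows "level_weight ns D label (c, l) =
    label (c, l) + lower_weight (c, l) + (if heavy_source (c, l) then Suc (desc_rank c) else 0)"
  using assms lengths_ge3[of c]
  by (simp add: level_weight_zero_one[OF zero_in_D one_in_D] lower_weight_def heavy_source_def label_sink)

lemma label_lower_strict_mono:
  assumes in_V: "(c1, l1) \<in> V" "(c2, l2) \<in> V" and less: "weight_key (c1, l1) < weight_key (c2, l2)"
    and d: "1 \<le> d" "d \<le> l1"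
  shows "label (c1, l1 - d) < label (c2, l2 - d)"
proof (rule label_strict_mono)
  have "l1 \<le> l2" using less by (auto simp: weight_key_def)
  then have "\<not> heavy_source (c1, l1 - d)" "\<not> heavy_source (c2, l2 - d)"
    using in_V d by (auto simp: heavy_source_def)
  then show "label_key (c1, l1 - d) < label_key (c2, l2 - d)"
    using less d \<open>l1 \<le> l2\<close> by (auto simp: label_key_def weight_key_def)
qed (use in_V d in auto)

lemma lower_weight_mono:
  assumes in_V: "(c1, l1) \<in> V" "(c2, l2) \<in> V" and less: "weight_key (c1, l1) < weight_key (c2, l2)"
  shows "lower_weight (c1, l1) \<le> lower_weight (c2, l2)"
    and "1 \<le> l2 \<Longrightarrow> lower_weight (c1, l1) < lower_weight (c2, l2)"
proof -
  let ?P = "\<lambda>l. {d\<in>D. 1 \<le> d \<and> d \<le> l}"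
  have "l1 \<le> l2" using less by (auto simp: weight_key_def)
  then have sub: "?P l1 \<subseteq> ?P l2" by auto
  have fin: "finite (?P l2)" by (rule finite_subset[of _ "{..l2}"]) auto
  have pointwise: "label (c1, l1 - d) < label (c2, l2 - d)" if "d \<in> ?P l1" for d
    using that label_lower_strict_mono[OF assms] by simp
  show "lower_weight (c1, l1) \<le> lower_weight (c2, l2)"
    unfolding lower_weight_def case_prod_conv
    by (rule sum_le_sum_superset[OF fin sub]) (simp add: pointwise less_imp_le)
  show "lower_weight (c1, l1) < lower_weight (c2, l2)" if "1 \<le> l2"
    unfolding lower_weight_def case_prod_conv
    by (rule sum_less_sum_superset[OF fin sub, where e = 1])
      (use pointwise one_in_D that in \<open>auto simp: label_def less_imp_le\<close>)
qed

lemma label_heavy_source_le: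
  assumes x: "(c1, l1) \<in> V" "heavy_source (c1, l1)" and y: "(c2, l2) \<in> V"
    and less: "weight_key (c1, l1) < weight_key (c2, l2)"
  shows "label (c1, l1) + Suc (desc_rank c1) \<le>
    label (c2, l2) + (if heavy_source (c2, l2) then Suc (desc_rank c2) else 0)"
proof (cases "l1 < l2")
  case True
  then show ?thesis using label_gap_above[OF x y] by simp
next
  case False
  then have "l1 = l2" "desc_rank c1 < desc_rank c2" using less by (auto simp: weight_key_def)
  moreover have "ns ! c2 \<le> ns ! c1"
    using x y \<open>desc_rank c1 < desc_rank c2\<close> by (intro length_le_if_desc_rank_le) auto
  then have "heavy_source (c2, l2)" using x y \<open>l1 = l2\<close> by (auto simp: heavy_source_def)
  ultimately show ?thesis using label_gap_heavy[OF x(1)] y x(2) by simp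
qed

lemma level_weight_label_strict_mono:
  assumes x: "(c1, l1) \<in> V" and y: "(c2, l2) \<in> V" and less: "weight_key (c1, l1) < weight_key (c2, l2)"
  shows "level_weight ns D label (c1, l1) < level_weight ns D label (c2, l2)"
proof -
  have "l1 \<le> l2" using less by (auto simp: weight_key_def)
  have high: "2 \<le> l" if "(c, l) \<in> V" "heavy_source (c, l)" for c l
    using that lengths_ge3[of c] by (simp add: heavy_source_def)
  note lower = lower_weight_mono[OF x y less]
  show ?thesis
  proof (cases "heavy_source (c1, l1)")
    case True
    moreover have "lower_weight (c1, l1) < lower_weight (c2, l2)"
      using lower(2) \<open>l1 \<le> l2\<close> high[OF x True] by simp
    ultimately show ?thesis using label_heavy_source_le[OF x _ y less]
      by (simp add: level_weight_label[OF x] level_weight_label[OF y])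
  next
    case light_x: False
    show ?thesis
    proof (cases "heavy_source (c2, l2)")
      case True
      then have "label (c1, l1) \<le> label (c2, l2) + Suc (desc_rank c2)"
        using label_gap_below[OF y True x light_x less] by simp
      moreover have "lower_weight (c1, l1) < lower_weight (c2, l2)"
        using lower(2) high[OF y True] by simp
      ultimately show ?thesis using light_x True
        by (simp add: level_weight_label[OF x] level_weight_label[OF y])
    next
      case False
      then have "label (c1, l1) < label (c2, l2)"
        using light_x less x by (intro label_strict_mono) (auto simp: label_key_def weight_key_def)
      then show ?thesis using light_x False lower(1)
        by (simp add: level_weight_label[OF x] level_weight_label[OF y])
    qed
  qed
qed

lemma level_antimagic_if_one_in:
  "\<exists>g. bij_betw g V {1..card V} \<and> inj_on (level_weight ns D g) V"
proof (intro exI conjI)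
  have "inj_on weight_key V"
    using inj_onD[OF desc_rank_inj] by (auto simp: inj_on_def weight_key_def)
  then show "inj_on (level_weight ns D label) V"
    by (rule inj_on_if_strict_mono_wrt) (auto intro: level_weight_label_strict_mono)
qed (rule bij_betw_label)

end

context theta_labelling
begin

lemma level_antimagic:
  "\<exists>g. bij_betw g V {1..card V} \<and> inj_on (level_weight ns D g) V"
proof (cases "1 \<in> D")
  case True
  interpret theta_labelling_one ns D by unfold_locales (rule True)
  show ?thesis by (rule level_antimagic_if_one_in)
qed (rule level_antimagic_if_one_notin)

end

theorem theta_D_antimagic_iff:
  assumes ge3: "\<forall>n\<in>set ns. 3 \<le> n" and "2 \<le> length ns"
  shows "D_antimagic (theta_vertices ns) (theta_arcs ns) D \<longleftrightarrow> 0 \<in> D"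
proof
  assume "0 \<in> D"
  then interpret theta_labelling ns D by unfold_locales (use ge3 in simp)
  obtain g where g: "bij_betw g V {1..card V}" "inj_on (level_weight ns D g) V"
    using level_antimagic by blast
  have flip: "bij_betw (theta_flip ns) V V" by (rule bij_betw_theta_flip[OF ge3])
  have "bij_betw (g \<circ> theta_flip ns) V {1..card V}" by (rule bij_betw_trans[OF flip g(1)])
  moreover have "inj_on (level_weight ns D g \<circ> theta_flip ns) V"
    using g(2) flip by (simp add: comp_inj_on bij_betw_def)
  then have "inj_on (D_weight V (theta_arcs ns) D (g \<circ> theta_flip ns)) V"
    by (rule inj_on_cong[THEN iffD1, rotated]) (auto simp: D_weight_theta lengths_ge3)
  ultimately show "D_antimagic V (theta_arcs ns) D"
    by (auto simp: D_antimagic_def D_antimagic_labeling_def)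
qed (use theta_not_D_antimagic assms in blast)

theorem mainTheorem19:
  fixes V :: "'a set" and A :: "('a \<times> 'a) set" and ns :: "nat list" and D :: "nat set"
  assumes "theta_oriented_2reg V A ns"
    and "length ns \<ge> 2"
    and "distance_set V A D"
  shows "D_antimagic V A D \<longleftrightarrow> Min D = 0"
proof -
  have ge3: "\<forall>n\<in>set ns. 3 \<le> n" using assms(1) by (simp add: theta_oriented_2reg_def)
  obtain \<phi> where iso: "digraph_iso \<phi> V A (theta_vertices ns) (theta_arcs ns)"
    using assms(1) theta_arcs_subset[OF ge3] by (auto simp: theta_oriented_2reg_def digraph_iso_def)
  then have "finite V"
    using bij_betw_finite[of \<phi> V "theta_vertices ns"] by (simp add: digraph_iso_def)
  then have "finite D" "D \<noteq> {}"
    using assms(3) distance_set_finite by (auto simp: distance_set_def)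
  then have "Min D = 0 \<longleftrightarrow> 0 \<in> D" by (metis Min_in Min_le le_zero_eq)
  then show ?thesis
    using D_antimagic_digraph_iso[OF iso] theta_D_antimagic_iff[OF ge3 assms(2)] by simp
qed

end
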